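(* Let $X$ be a real separable Hilbert space with inner product $(\cdot,\cdot)_X$, let $T>0$, and let $0=t_1<t_2<\cdots<t_{s+1}=T$. Set $\delta_j=t_{j+1}-t_j$ for $j=1,\dots,s$ and $\Delta=\mathrm{diag}(\delta_1,\dots,\delta_s)\in\mathbb{R}^{s\times s}$. Let $\{\phi_k\}_{k=1}^m\subset X$ be linearly independent, let $M\in\mathbb{R}^{m\times m}$ have entries $M_{j,k}=(\phi_j,\phi_k)_X$, and let $U\in\mathbb{R}^{m\times s}$ have entries $U_{k,j}$. Define $u_j=\sum_{k=1}^m U_{k,j}\phi_k\in X$ for $j=1,\dots,s$, and $u\in L^2(0,T;X)$ by $u(t)=\sum_{j=1}^s u_j\chi_j(t)$, where $\chi_j(t)=1$ for $t_j<t<t_{j+1}$ and $\chi_j(t)=0$ otherwise. Let $K:L^2(0,T)\to X$ be the POD operator $Kf=\int_0^T u(t)f(t)\,dt$. Then $\{\sigma_i,w_i,v_i\}\subset\mathbb{R}\times\mathbb{R}^s_\Delta\times\mathbb{R}^m_M$ are the core singular values and singular vectors of the matrix $U\Delta:\mathbb{R}^s_\Delta\to\mathbb{R}^m_M$ if and only if $\{\sigma_i,f_i,x_i\}\subset\mathbb{R}\times L^2(0,T)\times X$ are the core singular values and singular vectors of $K:L^2(0,T)\to X$, where for all $i$ the vectors $v_i=(v_{i,1},\dots,v_{i,m})$ and $x_i$ are related by $$x_i=\sum_{k=1}^m v_{i,k}\phi_k,$$ and $w_i=(w_{i,1},\dots,w_{i,s})$ and $f_i$ are related by $$w_{i,j}=\int_0^T\delta_j^{-1}\chi_j(t)f_i(t)\,dt,\qquad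 f_i(t)=\sum_{\ell=1}^s w_{i,\ell}\chi_\ell(t).$$
   Context: For a symmetric positive definite matrix $M\in\mathbb{R}^{m\times m}$, $\mathbb{R}^m_M$ denotes $\mathbb{R}^m$ with inner product $(x,y)_M=y^TMx$; similarly $\mathbb{R}^s_\Delta$. $\mathbb{R}^k$ without subscript carries the standard inner product. For a compact linear operator $A:\mathcal{X}\to\mathcal{Y}$ between separable Hilbert spaces with Hilbert adjoint $A^*$, the core singular values and singular vectors are the positive singular values $\sigma_1\ge\sigma_2\ge\cdots>0$ (square roots of the positive eigenvalues of $A^*A$, equivalently of $AA^*$), together with orthonormal families $\{\xi_i\}\subset\mathcal{X}$ (eigenvectors of $A^*A$) and $\{\eta_i\}\subset\mathcal{Y}$ (eigenvectors of $AA^*$) satisfying $A\xi_i=\sigma_i\eta_i$ and $A^*\eta_i=\sigma_i\xi_i$ for all $i$; in the triples above, the first vector lies in the domain and the second in the codomain. For a matrix $A:\mathbb{R}^s_\Delta\to\mathbb{R}^m_M$, the adjoint is $A^*=\Delta^{-1}A^TM$. The adjoint of $K$ is $(K^*x)(t)=(x,u(t))_X$. *)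

theory Defs
  imports "HOL-Analysis.Analysis"
begin

text \<open>Equality of two elements a, b of a (pre-)Hilbert space given by a carrier C
  and an inner product ip, in the weak sense: (a,z) = c (b,z) for all z in C,
  i.e. a = c b as elements of the Hilbert space (for L2 this is a.e. equality).\<close>
definition heq_scaled :: "('x \<Rightarrow> 'x \<Rightarrow> real) \<Rightarrow> 'x set \<Rightarrow> 'x \<Rightarrow> real \<Rightarrow> 'x \<Rightarrow> bool" where
  "heq_scaled ip C a c b \<longleftrightarrow> (\<forall>z\<in>C. ip a z = c * ip b z)"

text \<open>The last clause says the xi_i exhaust the eigenvectors of A* A with positive
  eigenvalue (so the sigma_i are all positive singular values, with multiplicity).\<close>
definition core_svd ::
  "('x \<Rightarrow> 'x \<Rightarrow> real) \<Rightarrow> 'x set \<Rightarrow> ('y \<Rightarrow> 'y \<Rightarrow> real) \<Rightarrow> 'y set \<Rightarrow>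
   ('x \<Rightarrow> 'y) \<Rightarrow> ('y \<Rightarrow> 'x) \<Rightarrow> nat set \<Rightarrow> (nat \<Rightarrow> real) \<Rightarrow> (nat \<Rightarrow> 'x) \<Rightarrow> (nat \<Rightarrow> 'y) \<Rightarrow> bool" where
  "core_svd ip1 C1 ip2 C2 A Aadj I \<sigma> \<xi> \<eta> \<longleftrightarrow>
     0 \<notin> I \<and> (\<forall>i\<in>I. \<forall>j. 1 \<le> j \<and> j \<le> i \<longrightarrow> j \<in> I) \<and>
     (\<forall>i\<in>I. 0 < \<sigma> i) \<and>
     (\<forall>i\<in>I. \<forall>j\<in>I. i \<le> j \<longrightarrow> \<sigma> j \<le> \<sigma> i) \<and>
     (\<forall>i\<in>I. \<xi> i \<in> C1 \<and> \<eta> i \<in> C2) \<and>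
     (\<forall>i\<in>I. \<forall>j\<in>I. ip1 (\<xi> i) (\<xi> j) = (if i = j then 1 else 0)) \<and>
     (\<forall>i\<in>I. \<forall>j\<in>I. ip2 (\<eta> i) (\<eta> j) = (if i = j then 1 else 0)) \<and>
     (\<forall>i\<in>I. heq_scaled ip2 C2 (A (\<xi> i)) (\<sigma> i) (\<eta> i)) \<and>
     (\<forall>i\<in>I. heq_scaled ip1 C1 (Aadj (\<eta> i)) (\<sigma> i) (\<xi> i)) \<and>
     (\<forall>x\<in>C1. \<forall>c>0. (heq_scaled ip1 C1 (Aadj (A x)) c x \<and> (\<forall>i\<in>I. ip1 x (\<xi> i) = 0))
         \<longrightarrow> ip1 x x = 0)"

subsection \<open>Finite-dimensional spaces: vectors nat => real with components 1..n\<close>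

definition vecs :: "nat \<Rightarrow> (nat \<Rightarrow> real) set" where
  "vecs n = {x. \<forall>k. k \<notin> {1..n} \<longrightarrow> x k = 0}"

definition mat_vec :: "nat \<Rightarrow> nat \<Rightarrow> (nat \<Rightarrow> nat \<Rightarrow> real) \<Rightarrow> (nat \<Rightarrow> real) \<Rightarrow> (nat \<Rightarrow> real)" where
  "mat_vec r c A x = (\<lambda>k. if k \<in> {1..r} then (\<Sum>j=1..c. A k j * x j) else 0)"

definition mat_mul :: "nat \<Rightarrow> (nat \<Rightarrow> nat \<Rightarrow> real) \<Rightarrow> (nat \<Rightarrow> nat \<Rightarrow> real) \<Rightarrow> (nat \<Rightarrow> nat \<Rightarrow> real)" where
  "mat_mul n A B = (\<lambda>i j. \<Sum>l=1..n. A i l * B l j)"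

definition mat_transpose :: "(nat \<Rightarrow> nat \<Rightarrow> real) \<Rightarrow> (nat \<Rightarrow> nat \<Rightarrow> real)" where
  "mat_transpose A = (\<lambda>i j. A j i)"

definition diag_mat :: "(nat \<Rightarrow> real) \<Rightarrow> (nat \<Rightarrow> nat \<Rightarrow> real)" where
  "diag_mat d = (\<lambda>i j. if i = j then d i else 0)"

definition wip :: "nat \<Rightarrow> (nat \<Rightarrow> nat \<Rightarrow> real) \<Rightarrow> (nat \<Rightarrow> real) \<Rightarrow> (nat \<Rightarrow> real) \<Rightarrow> real" where
  "wip n W x y = (\<Sum>k=1..n. \<Sum>l=1..n. y k * W k l * x l)"

text \<open>adjoint of A : R^c_D -> R^r_W, namely D^{-1} A^T W (D diagonal with entries d)\<close>
definition mat_adj :: "nat \<Rightarrow> nat \<Rightarrow> (nat \<Rightarrow> real) \<Rightarrow> (nat \<Rightarrow> nat \<Rightarrow> real) \<Rightarrow> (nat \<Rightarrow> nat \<Rightarrow> real)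
    \<Rightarrow> (nat \<Rightarrow> nat \<Rightarrow> real)" where
  "mat_adj r c d W A = mat_mul c (diag_mat (\<lambda>j. 1 / d j)) (mat_mul r (mat_transpose A) W)"

subsection \<open>L2(0,T) represented by (representatives of) square-integrable functions\<close>

definition L2 :: "real \<Rightarrow> (real \<Rightarrow> real) set" where
  "L2 T = {f. f \<in> borel_measurable (lebesgue_on {0..T}) \<and>
               integrable (lebesgue_on {0..T}) (\<lambda>t. (f t)\<^sup>2)}"

definition L2_ip :: "real \<Rightarrow> (real \<Rightarrow> real) \<Rightarrow> (real \<Rightarrow> real) \<Rightarrow> real" where
  "L2_ip T f g = (LINT t|lebesgue_on {0..T}. f t * g t)"

definition chi :: "(nat \<Rightarrow> real) \<Rightarrow> nat \<Rightarrow> real \<Rightarrow> real" where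
  "chi tt j t = (if tt j < t \<and> t < tt (Suc j) then 1 else 0)"

definition deltas :: "(nat \<Rightarrow> real) \<Rightarrow> nat \<Rightarrow> real" where
  "deltas tt j = tt (Suc j) - tt j"

definition pod_u :: "(nat \<Rightarrow> real) \<Rightarrow> (nat \<Rightarrow> nat \<Rightarrow> real) \<Rightarrow> (nat \<Rightarrow> 'a::real_vector)
    \<Rightarrow> nat \<Rightarrow> nat \<Rightarrow> real \<Rightarrow> 'a" where
  "pod_u tt U \<phi> s m t = (\<Sum>j=1..s. chi tt j t *\<^sub>R (\<Sum>k=1..m. U k j *\<^sub>R \<phi> k))"

end

theory Submission
  imports Defs
begin

text \<open>On step functions \<open>\<Sum>\<^sub>l a\<^sub>l \<chi>\<^sub>l\<close> the \<open>L\<^sup>2\<close> inner product is the \<open>\<Delta>\<close>-inner product of the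
  coefficient vectors, and \<open>v \<mapsto> \<Sum>\<^sub>k v\<^sub>k \<phi>\<^sub>k\<close> carries the \<open>M\<close>-inner product to that of \<open>X\<close>.
  Through these two embeddings \<open>K\<close> acts as \<open>U\<Delta>\<close> and \<open>K\<^sup>*\<close> as \<open>\<Delta>\<^sup>-\<^sup>1 (U\<Delta>)\<^sup>T M\<close>, while \<open>K f\<close>
  only depends on the \<open>\<chi>\<^sub>j\<close>-moments of \<open>f\<close>. Hence every clause of the singular system
  transfers between the two sides. For the completeness clause one uses that \<open>K\<^sup>*\<close> takes values
  in the step functions, so an eigenfunction of \<open>K\<^sup>*K\<close> with positive eigenvalue is itself a
  step function.\<close>

lemma chi_eq_indicator: "chi tt j = indicator {tt j<..<tt (Suc j)}"
  by (auto simp: chi_def indicator_def fun_eq_iff)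

lemma chi_measurable: "chi tt j \<in> borel_measurable (lebesgue_on S)"
  unfolding chi_eq_indicator by (simp add: measurable_completion measurable_restrict_space1)

lemma L2_integrable_mult:
  assumes "f \<in> L2 T" "g \<in> L2 T"
  shows "integrable (lebesgue_on {0..T}) (\<lambda>t. f t * g t)"
proof (rule Bochner_Integration.integrable_bound)
  show "integrable (lebesgue_on {0..T}) (\<lambda>t. (f t)\<^sup>2 + (g t)\<^sup>2)"
    "(\<lambda>t. f t * g t) \<in> borel_measurable (lebesgue_on {0..T})"
    using assms by (auto simp: L2_def)
  have "\<bar>f t\<bar> * \<bar>g t\<bar> \<le> (f t)\<^sup>2 + (g t)\<^sup>2" for t
  proof -
    have "2 * (\<bar>f t\<bar> * \<bar>g t\<bar>) \<le> (f t)\<^sup>2 + (g t)\<^sup>2"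
      using sum_squares_bound[of "\<bar>f t\<bar>" "\<bar>g t\<bar>"] by (simp add: mult.assoc)
    moreover have "0 \<le> \<bar>f t\<bar> * \<bar>g t\<bar>" by simp
    ultimately show ?thesis by linarith
  qed
  then show "AE t in lebesgue_on {0..T}. norm (f t * g t) \<le> norm ((f t)\<^sup>2 + (g t)\<^sup>2)"
    by (simp add: abs_mult)
qed

lemma bounded_measurable_in_L2:
  assumes "g \<in> borel_measurable (lebesgue_on {0..T})" "\<And>t. \<bar>g t\<bar> \<le> B"
  shows "g \<in> L2 T"
proof -
  have "finite_measure (lebesgue_on {0..T})"
    by (rule finite_measure_lebesgue_on) simp
  moreover have "AE t in lebesgue_on {0..T}. norm ((g t)\<^sup>2) \<le> B\<^sup>2"
    using assms(2) by (intro AE_I2) (simp, metis abs_ge_zero power2_abs power_mono)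
  ultimately have "integrable (lebesgue_on {0..T}) (\<lambda>t. (g t)\<^sup>2)"
    using assms(1) by (intro finite_measure.integrable_const_bound) auto
  then show ?thesis
    using assms(1) by (simp add: L2_def)
qed

lemma L2_ip_commute: "L2_ip T f g = L2_ip T g f"
  by (simp add: L2_ip_def mult.commute)

lemma heq_scaled_refl: "heq_scaled ip C a 1 a"
  by (simp add: heq_scaled_def)

lemma heq_scaled_cong_right:
  "heq_scaled ip C b 1 b' \<Longrightarrow> heq_scaled ip C a c b \<longleftrightarrow> heq_scaled ip C a c b'"
  by (simp add: heq_scaled_def)

lemma heq_scaled_inner_UNIV_iff: "heq_scaled inner UNIV a c b \<longleftrightarrow> a = c *\<^sub>R b"
proof
  assume "heq_scaled inner UNIV a c b"
  then have "inner a (a - c *\<^sub>R b) = c * inner b (a - c *\<^sub>R b)"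
    unfolding heq_scaled_def by blast
  then have "inner (a - c *\<^sub>R b) (a - c *\<^sub>R b) = 0"
    by (simp add: inner_diff_left)
  then show "a = c *\<^sub>R b" by simp
qed (simp add: heq_scaled_def)

lemma wip_diag_mat: "wip n (diag_mat d) a b = (\<Sum>k=1..n. d k * a k * b k)"
  unfolding wip_def diag_mat_def
  by (simp add: if_distrib[of "\<lambda>z. _ * z"] if_distrib[of "\<lambda>z. z * _"] mult_ac cong: if_cong)

lemma heq_scaled_wip_diag_mat_iff:
  assumes "\<forall>k\<in>{1..n}. 0 < d k"
  shows "heq_scaled (wip n (diag_mat d)) (vecs n) a c b \<longleftrightarrow> (\<forall>k\<in>{1..n}. a k = c * b k)"
proof
  assume heq: "heq_scaled (wip n (diag_mat d)) (vecs n) a c b"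
  show "\<forall>k\<in>{1..n}. a k = c * b k"
  proof
    fix k assume k: "k \<in> {1..n}"
    define e where "e l = (if l = k then 1 else 0 :: real)" for l
    have "e \<in> vecs n"
      using k by (simp add: e_def vecs_def)
    then have "wip n (diag_mat d) a e = c * wip n (diag_mat d) b e"
      using heq by (simp add: heq_scaled_def)
    then have "d k * a k = c * (d k * b k)"
      using k by (simp add: wip_diag_mat e_def if_distrib[of "\<lambda>z. _ * z"] cong: if_cong)
    moreover have "0 < d k"
      using assms k by blast
    ultimately show "a k = c * b k" by simp
  qed
qed (simp add: heq_scaled_def wip_diag_mat sum_distrib_left mult_ac)

definition synthesis :: "nat \<Rightarrow> (nat \<Rightarrow> 'a::real_vector) \<Rightarrow> (nat \<Rightarrow> real) \<Rightarrow> 'a" where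
  "synthesis n \<phi> a = (\<Sum>k=1..n. a k *\<^sub>R \<phi> k)"

lemma synthesis_cong: "(\<And>k. k \<in> {1..n} \<Longrightarrow> a k = b k) \<Longrightarrow> synthesis n \<phi> a = synthesis n \<phi> b"
  unfolding synthesis_def by (rule sum.cong) auto

lemma synthesis_diff:
  "synthesis n \<phi> a - c *\<^sub>R synthesis n \<phi> b = synthesis n \<phi> (\<lambda>k. a k - c * b k)"
  unfolding synthesis_def by (simp add: scaleR_diff_left sum_subtractf scaleR_sum_right)

lemma wip_gram:
  "wip n (\<lambda>j k. inner (\<phi> j) (\<phi> k)) a b = inner (synthesis n \<phi> b) (synthesis n \<phi> a)"
  unfolding wip_def synthesis_def
  by (simp add: inner_sum_left inner_sum_right sum_distrib_left) (subst sum.swap, simp add: mult_ac)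

lemma heq_scaled_wip_gram_iff:
  "heq_scaled (wip n (\<lambda>j k. inner (\<phi> j) (\<phi> k))) (vecs n) a c b
     \<longleftrightarrow> synthesis n \<phi> a = c *\<^sub>R synthesis n \<phi> b"
proof
  assume heq: "heq_scaled (wip n (\<lambda>j k. inner (\<phi> j) (\<phi> k))) (vecs n) a c b"
  define e where "e k = (if k \<in> {1..n} then a k - c * b k else 0)" for k
  have e: "synthesis n \<phi> e = synthesis n \<phi> a - c *\<^sub>R synthesis n \<phi> b"
    unfolding synthesis_diff by (rule synthesis_cong) (simp add: e_def)
  have "e \<in> vecs n"
    by (simp add: e_def vecs_def)
  then have "inner (synthesis n \<phi> e) (synthesis n \<phi> a) = c * inner (synthesis n \<phi> e) (synthesis n \<phi> b)"
    using heq unfolding heq_scaled_def wip_gram by blast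
  then have "inner (synthesis n \<phi> e) (synthesis n \<phi> e) = 0"
    unfolding e by (simp add: inner_diff_right)
  then show "synthesis n \<phi> a = c *\<^sub>R synthesis n \<phi> b"
    unfolding e by simp
qed (simp add: heq_scaled_def wip_gram)

lemma mat_mul_diag_mat_left:
  "k \<in> {1..n} \<Longrightarrow> mat_mul n (diag_mat d) B k l = d k * B k l"
  unfolding mat_mul_def diag_mat_def by (simp add: if_distrib[of "\<lambda>z. z * _"] cong: if_cong)

lemma mat_mul_diag_mat_right:
  "l \<in> {1..n} \<Longrightarrow> mat_mul n B (diag_mat d) k l = B k l * d l"
  unfolding mat_mul_def diag_mat_def by (simp add: if_distrib[of "\<lambda>z. _ * z"] cong: if_cong)

lemma mat_adj_mul_diag_mat:
  assumes "k \<in> {1..c}" "d k \<noteq> 0"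
  shows "mat_adj r c d W (mat_mul c B (diag_mat d)) k l = (\<Sum>q=1..r. B q k * W q l)"
  using assms unfolding mat_adj_def
  by (simp add: mat_mul_diag_mat_left mat_mul_diag_mat_right mat_mul_def[of r] mat_transpose_def
      sum_distrib_left mult_ac)

locale time_grid =
  fixes T :: real and tt :: "nat \<Rightarrow> real" and s :: nat
  assumes grid_start: "0 \<le> tt 1"
    and grid_incr: "\<forall>j\<in>{1..s}. tt j < tt (Suc j)"
    and grid_end: "tt (Suc s) \<le> T"
begin

abbreviation delta_ip :: "(nat \<Rightarrow> real) \<Rightarrow> (nat \<Rightarrow> real) \<Rightarrow> real" where
  "delta_ip \<equiv> wip s (diag_mat (deltas tt))"

definition step_fun :: "(nat \<Rightarrow> real) \<Rightarrow> real \<Rightarrow> real" where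
  "step_fun a t = (\<Sum>l=1..s. a l * chi tt l t)"

definition chi_moment :: "nat \<Rightarrow> (real \<Rightarrow> real) \<Rightarrow> real" where
  "chi_moment j g = (LINT t|lebesgue_on {0..T}. chi tt j t * g t)"

lemma grid_mono:
  assumes "1 \<le> j" "j \<le> l" "l \<le> Suc s"
  shows "tt j \<le> tt l"
  using assms(2,3)
proof (induction l rule: dec_induct)
  case (step n)
  then have "tt n < tt (Suc n)"
    using assms(1) grid_incr by auto
  with step show ?case by simp
qed simp

lemma grid_interval_bounds: "j \<in> {1..s} \<Longrightarrow> 0 \<le> tt j \<and> tt (Suc j) \<le> T"
  using grid_mono[of 1 j] grid_mono[of "Suc j" "Suc s"] grid_start grid_end by auto

lemma deltas_pos: "j \<in> {1..s} \<Longrightarrow> 0 < deltas tt j"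
  using grid_incr by (simp add: deltas_def)

lemma chi_mult_chi:
  assumes "j \<in> {1..s}" "l \<in> {1..s}"
  shows "chi tt j t * chi tt l t = (if j = l then chi tt j t else 0)"
proof (cases j l rule: linorder_cases)
  case less
  then have "tt (Suc j) \<le> tt l"
    using assms grid_mono[of "Suc j" l] by auto
  then show ?thesis
    using less by (auto simp: chi_def)
next
  case greater
  then have "tt (Suc l) \<le> tt j"
    using assms grid_mono[of "Suc l" j] by auto
  then show ?thesis
    using greater by (auto simp: chi_def)
qed (simp add: chi_def)

lemma chi_in_L2: "chi tt j \<in> L2 T"
  by (rule bounded_measurable_in_L2[where B=1]) (simp_all add: chi_measurable chi_def)

lemma integral_chi:
  assumes "j \<in> {1..s}"
  shows "(LINT t|lebesgue_on {0..T}. chi tt j t) = deltas tt j"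
proof -
  have sub: "{tt j<..<tt (Suc j)} \<subseteq> {0..T}"
    using grid_interval_bounds[OF assms] by auto
  have "(LINT t|lebesgue_on {0..T}. chi tt j t) = measure (lebesgue_on {0..T}) {tt j<..<tt (Suc j)}"
    unfolding chi_eq_indicator using sub
    by (subst Bochner_Integration.integral_indicator) (auto intro!: arg_cong[where f="measure _"])
  also have "\<dots> = measure lebesgue {tt j<..<tt (Suc j)}"
    using sub by (subst measure_restrict_space) auto
  also have "\<dots> = deltas tt j"
    using deltas_pos[OF assms] by (simp add: deltas_def)
  finally show ?thesis .
qed

lemma step_fun_cong: "(\<And>l. l \<in> {1..s} \<Longrightarrow> a l = b l) \<Longrightarrow> step_fun a = step_fun b"
  unfolding step_fun_def fun_eq_iff by simp

lemma step_fun_in_L2: "step_fun a \<in> L2 T"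
proof (rule bounded_measurable_in_L2)
  show "step_fun a \<in> borel_measurable (lebesgue_on {0..T})"
    unfolding step_fun_def using chi_measurable by measurable
  fix t
  have "\<bar>step_fun a t\<bar> \<le> (\<Sum>l=1..s. \<bar>a l * chi tt l t\<bar>)"
    unfolding step_fun_def by (rule sum_abs)
  also have "\<dots> \<le> (\<Sum>l=1..s. \<bar>a l\<bar>)"
    by (rule sum_mono) (auto simp: chi_def abs_mult)
  finally show "\<bar>step_fun a t\<bar> \<le> (\<Sum>l=1..s. \<bar>a l\<bar>)" .
qed

lemma chi_moment_eq_L2_ip: "chi_moment j g = L2_ip T g (chi tt j)"
  by (simp add: chi_moment_def L2_ip_def mult.commute)

lemma L2_ip_step_fun:
  assumes "z \<in> L2 T"
  shows "L2_ip T (step_fun a) z = (\<Sum>l=1..s. a l * chi_moment l z)"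
proof -
  have "L2_ip T (step_fun a) z = (LINT t|lebesgue_on {0..T}. (\<Sum>l=1..s. a l * (chi tt l t * z t)))"
    unfolding L2_ip_def step_fun_def by (simp add: sum_distrib_right mult.assoc)
  also have "\<dots> = (\<Sum>l=1..s. a l * chi_moment l z)"
    unfolding chi_moment_def using L2_integrable_mult[OF chi_in_L2 assms] by simp
  finally show ?thesis .
qed

lemma chi_moment_step_fun:
  assumes "j \<in> {1..s}"
  shows "chi_moment j (step_fun b) = deltas tt j * b j"
proof -
  have "chi_moment j (step_fun b) = (\<Sum>l=1..s. b l * chi_moment l (chi tt j))"
    by (simp add: chi_moment_eq_L2_ip L2_ip_step_fun chi_in_L2)
  also have "\<dots> = (\<Sum>l=1..s. if l = j then b j * deltas tt j else 0)"
    using assms by (intro sum.cong) (auto simp: chi_moment_def chi_mult_chi integral_chi)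
  finally show ?thesis
    using assms by simp
qed

lemma L2_ip_step_fun_step_fun: "L2_ip T (step_fun a) (step_fun b) = delta_ip a b"
  by (simp add: L2_ip_step_fun step_fun_in_L2 chi_moment_step_fun wip_diag_mat mult_ac)

lemma heq_scaled_step_fun_iff:
  "heq_scaled (L2_ip T) (L2 T) (step_fun a) c (step_fun b) \<longleftrightarrow> heq_scaled delta_ip (vecs s) a c b"
proof -
  have "heq_scaled (L2_ip T) (L2 T) (step_fun a) c (step_fun b) \<longleftrightarrow> (\<forall>l\<in>{1..s}. a l = c * b l)"
  proof
    assume heq: "heq_scaled (L2_ip T) (L2 T) (step_fun a) c (step_fun b)"
    show "\<forall>l\<in>{1..s}. a l = c * b l"
    proof
      fix l assume l: "l \<in> {1..s}"
      have "chi_moment l (step_fun a) = c * chi_moment l (step_fun b)"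
        using heq chi_in_L2 by (simp add: heq_scaled_def chi_moment_eq_L2_ip)
      then show "a l = c * b l"
        using l deltas_pos[OF l] by (simp add: chi_moment_step_fun)
    qed
  qed (simp add: heq_scaled_def L2_ip_step_fun sum_distrib_left mult_ac)
  also have "\<dots> \<longleftrightarrow> heq_scaled delta_ip (vecs s) a c b"
    using deltas_pos by (simp add: heq_scaled_wip_diag_mat_iff)
  finally show ?thesis .
qed

lemma chi_moment_heq_step_fun:
  assumes "heq_scaled (L2_ip T) (L2 T) g 1 (step_fun y)" "j \<in> {1..s}"
  shows "chi_moment j g = deltas tt j * y j"
proof -
  have "chi_moment j g = chi_moment j (step_fun y)"
    using assms(1) chi_in_L2 by (simp add: heq_scaled_def chi_moment_eq_L2_ip)
  then show ?thesis
    using chi_moment_step_fun[OF assms(2)] by simp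
qed

lemma heq_scaled_step_fun_divideE:
  assumes "heq_scaled (L2_ip T) (L2 T) (step_fun a) c g" "c \<noteq> 0"
  obtains y where "y \<in> vecs s" "heq_scaled (L2_ip T) (L2 T) g 1 (step_fun y)"
proof
  define y where "y l = (if l \<in> {1..s} then a l / c else 0)" for l
  show "y \<in> vecs s"
    by (simp add: y_def vecs_def)
  show "heq_scaled (L2_ip T) (L2 T) g 1 (step_fun y)"
    unfolding heq_scaled_def
  proof
    fix z assume z: "z \<in> L2 T"
    have "L2_ip T (step_fun y) z = L2_ip T (step_fun a) z / c"
      unfolding L2_ip_step_fun[OF z] by (simp add: y_def sum_divide_distrib)
    also have "\<dots> = L2_ip T g z"
      using assms z by (simp add: heq_scaled_def)
    finally show "L2_ip T g z = 1 * L2_ip T (step_fun y) z" by simp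
  qed
qed

end

locale pod_operator = time_grid T tt s
  for T :: real and tt :: "nat \<Rightarrow> real" and s :: nat +
  fixes \<phi> :: "nat \<Rightarrow> 'a::{real_inner, complete_space, second_countable_topology}"
    and U :: "nat \<Rightarrow> nat \<Rightarrow> real" and m :: nat
begin

abbreviation gram :: "nat \<Rightarrow> nat \<Rightarrow> real" where
  "gram \<equiv> \<lambda>j k. inner (\<phi> j) (\<phi> k)"

abbreviation pod_matrix :: "nat \<Rightarrow> nat \<Rightarrow> real" where
  "pod_matrix \<equiv> mat_mul s U (diag_mat (deltas tt))"

abbreviation pod_matrix_adj :: "nat \<Rightarrow> nat \<Rightarrow> real" where
  "pod_matrix_adj \<equiv> mat_adj m s (deltas tt) gram pod_matrix"

definition snapshot :: "nat \<Rightarrow> 'a" where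
  "snapshot j = synthesis m \<phi> (\<lambda>k. U k j)"

definition pod_K :: "(real \<Rightarrow> real) \<Rightarrow> 'a" where
  "pod_K g = (LINT t|lebesgue_on {0..T}. g t *\<^sub>R pod_u tt U \<phi> s m t)"

definition pod_K_adj :: "'a \<Rightarrow> real \<Rightarrow> real" where
  "pod_K_adj y t = inner y (pod_u tt U \<phi> s m t)"

lemma pod_u_eq: "pod_u tt U \<phi> s m t = (\<Sum>j=1..s. chi tt j t *\<^sub>R snapshot j)"
  by (simp add: pod_u_def snapshot_def synthesis_def)

lemma pod_K_eq:
  assumes "g \<in> L2 T"
  shows "pod_K g = (\<Sum>j=1..s. chi_moment j g *\<^sub>R snapshot j)"
proof -
  have int: "integrable (lebesgue_on {0..T}) (\<lambda>t. chi tt j t * g t)" for j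
    using L2_integrable_mult[OF chi_in_L2 assms] .
  have "pod_K g = (LINT t|lebesgue_on {0..T}. (\<Sum>j=1..s. (chi tt j t * g t) *\<^sub>R snapshot j))"
    unfolding pod_K_def pod_u_eq by (simp add: scaleR_sum_right mult.commute)
  also have "\<dots> = (\<Sum>j=1..s. chi_moment j g *\<^sub>R snapshot j)"
    unfolding chi_moment_def using int by simp
  finally show ?thesis .
qed

lemma pod_K_adj_eq: "pod_K_adj y = step_fun (\<lambda>j. inner y (snapshot j))"
  by (simp add: fun_eq_iff pod_K_adj_def pod_u_eq step_fun_def inner_sum_right mult.commute)

lemma synthesis_pod_matrix:
  "synthesis m \<phi> (mat_vec m s pod_matrix y) = (\<Sum>j=1..s. (deltas tt j * y j) *\<^sub>R snapshot j)"
proof -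
  have "synthesis m \<phi> (mat_vec m s pod_matrix y)
      = (\<Sum>k=1..m. \<Sum>j=1..s. (deltas tt j * y j) *\<^sub>R (U k j *\<^sub>R \<phi> k))"
    unfolding synthesis_def mat_vec_def
    by (intro sum.cong) (simp_all add: mat_mul_diag_mat_right scaleR_sum_left mult_ac)
  also have "\<dots> = (\<Sum>j=1..s. (deltas tt j * y j) *\<^sub>R snapshot j)"
    unfolding snapshot_def synthesis_def scaleR_sum_right by (rule sum.swap)
  finally show ?thesis .
qed

lemma mat_vec_pod_matrix_adj:
  assumes "k \<in> {1..s}"
  shows "mat_vec s m pod_matrix_adj v k = inner (snapshot k) (synthesis m \<phi> v)"
  using assms deltas_pos[OF assms]
  by (simp add: mat_vec_def mat_adj_mul_diag_mat snapshot_def synthesis_def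
      inner_sum_left inner_sum_right sum_distrib_left sum_distrib_right mult_ac)

lemma pod_K_heq_step_fun:
  assumes "g \<in> L2 T" "heq_scaled (L2_ip T) (L2 T) g 1 (step_fun y)"
  shows "pod_K g = synthesis m \<phi> (mat_vec m s pod_matrix y)"
  using assms by (simp add: pod_K_eq synthesis_pod_matrix chi_moment_heq_step_fun)

lemma pod_K_step_fun: "pod_K (step_fun y) = synthesis m \<phi> (mat_vec m s pod_matrix y)"
  by (rule pod_K_heq_step_fun[OF step_fun_in_L2 heq_scaled_refl])

lemma pod_K_adj_synthesis: "pod_K_adj (synthesis m \<phi> v) = step_fun (mat_vec s m pod_matrix_adj v)"
  unfolding pod_K_adj_eq by (rule step_fun_cong) (simp add: mat_vec_pod_matrix_adj inner_commute)

lemma heq_scaled_pod_K_adj_pod_K_step_fun_iff: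
  "heq_scaled (L2_ip T) (L2 T) (pod_K_adj (pod_K (step_fun y))) c (step_fun y)
     \<longleftrightarrow> heq_scaled delta_ip (vecs s) (mat_vec s m pod_matrix_adj (mat_vec m s pod_matrix y)) c y"
  by (simp add: pod_K_step_fun pod_K_adj_synthesis heq_scaled_step_fun_iff)

end

locale pod_singular_data = pod_operator T tt s \<phi> U m
  for T tt s and \<phi> :: "nat \<Rightarrow> 'a::{real_inner, complete_space, second_countable_topology}" and U m +
  fixes I :: "nat set" and w v :: "nat \<Rightarrow> nat \<Rightarrow> real"
    and f :: "nat \<Rightarrow> real \<Rightarrow> real" and x :: "nat \<Rightarrow> 'a"
  assumes in_spaces: "\<forall>i\<in>I. v i \<in> vecs m \<and> w i \<in> vecs s \<and> f i \<in> L2 T"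
    and x_eq: "\<forall>i\<in>I. x i = (\<Sum>k=1..m. v i k *\<^sub>R \<phi> k)"
    and f_eq: "\<forall>i\<in>I. heq_scaled (L2_ip T) (L2 T) (f i) 1 (\<lambda>t. \<Sum>l=1..s. w i l * chi tt l t)"
begin

lemma f_heq_step_fun: "i \<in> I \<Longrightarrow> heq_scaled (L2_ip T) (L2 T) (f i) 1 (step_fun (w i))"
  using f_eq by (simp add: step_fun_def[abs_def])

lemma x_eq_synthesis: "i \<in> I \<Longrightarrow> x i = synthesis m \<phi> (v i)"
  using x_eq by (simp add: synthesis_def)

lemma L2_ip_step_fun_f: "i \<in> I \<Longrightarrow> L2_ip T (step_fun y) (f i) = delta_ip y (w i)"
  using f_heq_step_fun in_spaces step_fun_in_L2
  by (simp add: heq_scaled_def L2_ip_commute[of T "step_fun y"] L2_ip_step_fun_step_fun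
      wip_diag_mat mult_ac)

lemma L2_ip_f_f: "i \<in> I \<Longrightarrow> j \<in> I \<Longrightarrow> L2_ip T (f i) (f j) = delta_ip (w i) (w j)"
  using f_heq_step_fun in_spaces by (simp add: heq_scaled_def L2_ip_step_fun_f)

lemma inner_x_x: "i \<in> I \<Longrightarrow> j \<in> I \<Longrightarrow> inner (x i) (x j) = wip m gram (v i) (v j)"
  by (simp add: x_eq_synthesis wip_gram inner_commute)

lemma pod_K_f: "i \<in> I \<Longrightarrow> pod_K (f i) = synthesis m \<phi> (mat_vec m s pod_matrix (w i))"
  by (rule pod_K_heq_step_fun) (use in_spaces f_heq_step_fun in auto)

lemma heq_scaled_pod_K_f_iff:
  "i \<in> I \<Longrightarrow> heq_scaled inner UNIV (pod_K (f i)) c (x i)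
     \<longleftrightarrow> heq_scaled (wip m gram) (vecs m) (mat_vec m s pod_matrix (w i)) c (v i)"
  by (simp add: heq_scaled_inner_UNIV_iff heq_scaled_wip_gram_iff pod_K_f x_eq_synthesis)

lemma heq_scaled_pod_K_adj_x_iff:
  "i \<in> I \<Longrightarrow> heq_scaled (L2_ip T) (L2 T) (pod_K_adj (x i)) c (f i)
     \<longleftrightarrow> heq_scaled delta_ip (vecs s) (mat_vec s m pod_matrix_adj (v i)) c (w i)"
  by (simp add: heq_scaled_cong_right[OF f_heq_step_fun] x_eq_synthesis pod_K_adj_synthesis
      heq_scaled_step_fun_iff)

lemma completeness_iff:
  "(\<forall>y\<in>vecs s. \<forall>c>0. (heq_scaled delta_ip (vecs s) (mat_vec s m pod_matrix_adj (mat_vec m s pod_matrix y)) c y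
       \<and> (\<forall>i\<in>I. delta_ip y (w i) = 0)) \<longrightarrow> delta_ip y y = 0)
   \<longleftrightarrow> (\<forall>g\<in>L2 T. \<forall>c>0. (heq_scaled (L2_ip T) (L2 T) (pod_K_adj (pod_K g)) c g
       \<and> (\<forall>i\<in>I. L2_ip T g (f i) = 0)) \<longrightarrow> L2_ip T g g = 0)"
  (is "?matrix \<longleftrightarrow> ?operator")
proof
  assume matrix: ?matrix
  show ?operator
  proof (intro ballI allI impI)
    fix g and c :: real
    assume g: "g \<in> L2 T" and c: "0 < c"
      and eigen: "heq_scaled (L2_ip T) (L2 T) (pod_K_adj (pod_K g)) c g \<and> (\<forall>i\<in>I. L2_ip T g (f i) = 0)"
    obtain y where y: "y \<in> vecs s" and gy: "heq_scaled (L2_ip T) (L2 T) g 1 (step_fun y)"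
      using eigen c unfolding pod_K_adj_eq by (auto elim: heq_scaled_step_fun_divideE)
    have L2_ip_g: "L2_ip T g z = L2_ip T (step_fun y) z" if "z \<in> L2 T" for z
      using gy that by (simp add: heq_scaled_def)
    have "pod_K g = pod_K (step_fun y)"
      using g gy by (simp add: pod_K_heq_step_fun pod_K_step_fun)
    then have "heq_scaled delta_ip (vecs s) (mat_vec s m pod_matrix_adj (mat_vec m s pod_matrix y)) c y"
      using eigen by (simp add: heq_scaled_pod_K_adj_pod_K_step_fun_iff[symmetric] heq_scaled_cong_right[OF gy])
    moreover have "\<forall>i\<in>I. delta_ip y (w i) = 0"
      using eigen in_spaces by (simp add: L2_ip_step_fun_f[symmetric] L2_ip_g)
    ultimately have "delta_ip y y = 0"
      using matrix y c by blast
    moreover have "L2_ip T g g = delta_ip y y"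
      using g step_fun_in_L2
      by (simp add: L2_ip_g L2_ip_commute[of T "step_fun y"] L2_ip_step_fun_step_fun)
    ultimately show "L2_ip T g g = 0" by simp
  qed
next
  assume operator: ?operator
  show ?matrix
  proof (intro ballI allI impI)
    fix y and c :: real
    assume "y \<in> vecs s" and c: "0 < c"
      and eigen: "heq_scaled delta_ip (vecs s) (mat_vec s m pod_matrix_adj (mat_vec m s pod_matrix y)) c y
        \<and> (\<forall>i\<in>I. delta_ip y (w i) = 0)"
    then have "heq_scaled (L2_ip T) (L2 T) (pod_K_adj (pod_K (step_fun y))) c (step_fun y)
        \<and> (\<forall>i\<in>I. L2_ip T (step_fun y) (f i) = 0)"
      by (simp add: heq_scaled_pod_K_adj_pod_K_step_fun_iff L2_ip_step_fun_f)
    then have "L2_ip T (step_fun y) (step_fun y) = 0"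
      using operator step_fun_in_L2 c by blast
    then show "delta_ip y y = 0"
      by (simp add: L2_ip_step_fun_step_fun)
  qed
qed

end

theorem proposition3p1:
  fixes \<phi> :: "nat \<Rightarrow> 'a::{real_inner, complete_space, second_countable_topology}"
    and T :: real and tt :: "nat \<Rightarrow> real" and s m :: nat
    and U :: "nat \<Rightarrow> nat \<Rightarrow> real"
    and I :: "nat set" and \<sigma> :: "nat \<Rightarrow> real"
    and w v :: "nat \<Rightarrow> nat \<Rightarrow> real"
    and f :: "nat \<Rightarrow> real \<Rightarrow> real" and x :: "nat \<Rightarrow> 'a"
  defines "M \<equiv> (\<lambda>j k. inner (\<phi> j) (\<phi> k))"
    and "K \<equiv> (\<lambda>g. LINT t|lebesgue_on {0..T}. g t *\<^sub>R pod_u tt U \<phi> s m t)"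
    and "Kadj \<equiv> (\<lambda>y t. inner y (pod_u tt U \<phi> s m t))"
    and "A \<equiv> mat_mul s U (diag_mat (deltas tt))"
  assumes "T > 0" and "tt 1 = 0" and "\<forall>j\<in>{1..s}. tt j < tt (Suc j)" and "tt (Suc s) = T"
    and "inj_on \<phi> {1..m}" and "independent (\<phi> ` {1..m})"
    and "\<forall>i\<in>I. v i \<in> vecs m \<and> w i \<in> vecs s \<and> f i \<in> L2 T"
    and "\<forall>i\<in>I. x i = (\<Sum>k=1..m. v i k *\<^sub>R \<phi> k)"
    and "\<forall>i\<in>I. \<forall>j\<in>{1..s}. w i j = (LINT t|lebesgue_on {0..T}. (1 / (deltas tt) j) * chi tt j t * f i t)"
    and "\<forall>i\<in>I. heq_scaled (L2_ip T) (L2 T) (f i) 1 (\<lambda>t. \<Sum>l=1..s. w i l * chi tt l t)"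
  shows "core_svd (wip s (diag_mat (deltas tt))) (vecs s) (wip m M) (vecs m)
            (mat_vec m s A) (mat_vec s m (mat_adj m s (deltas tt) M A)) I \<sigma> w v
         \<longleftrightarrow> core_svd (L2_ip T) (L2 T) inner UNIV K Kadj I \<sigma> f x"
proof -
  interpret P: pod_singular_data T tt s \<phi> U m I w v f x
    using assms(6-8,11,12,14) by unfold_locales auto
  have K: "K = P.pod_K" and Kadj: "Kadj = P.pod_K_adj"
    unfolding assms(2,3) by (simp_all add: fun_eq_iff P.pod_K_def P.pod_K_adj_def)
  show ?thesis
    unfolding core_svd_def assms(1,4) K Kadj P.completeness_iff
    using P.in_spaces
    by (simp add: P.L2_ip_f_f P.inner_x_x P.heq_scaled_pod_K_f_iff P.heq_scaled_pod_K_adj_x_iff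
        cong: conj_cong)
qed

end
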